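(* Let $\mathbb{Z}_{(p_n)}$ be an odometer with scale $(p_n)$. Then $$\operatorname{Aut}^{(\infty)}(\mathbb{Z}_{(p_n)},+\mathbf{1})=\bigcup_{n=1}^{\infty}\operatorname{Aut}(\mathbb{Z}_{(p_n)},+p_n\mathbf{1}),$$ where the union is taken inside $\operatorname{Homeo}(\mathbb{Z}_{(p_n)})$. Moreover, the same equality holds with $(p_n)$ replaced by any scale $(s_n)$ equivalent to $(p_n)$, i.e. $\operatorname{Aut}^{(\infty)}(\mathbb{Z}_{(p_n)},+\mathbf{1})=\bigcup_{n}\operatorname{Aut}(\mathbb{Z}_{(p_n)},+s_n\mathbf{1})$.
   Context: A scale is a sequence $(p_n)$ of positive integers with $p_n\mid p_{n+1}$, not eventually constant. The odometer is $\mathbb{Z}_{(p_n)}=\{(x_n)\in\prod_n\mathbb{Z}/p_n\mathbb{Z}: x_{n+1}\equiv x_n\bmod p_n\}$; $\mathbf{1}=(1,1,\dots)$ and $+c\mathbf{1}$ denotes translation by $c\mathbf{1}$. Two scales $(p_n),(s_n)$ are equivalent if $\lim_n\nu_p(p_n)=\lim_n\nu_p(s_n)$ (in $\mathbb{N}\cup\{0,\infty\}$) for every prime $p$, $\nu_p$ being the $p$-adic valuation. $\operatorname{Aut}(X,T)$ is the group of homeomorphisms commuting with $T$ and $\operatorname{Aut}^{(\infty)}(X,T)=\bigcup_{n\ge1}\operatorname{Aut}(X,T^n)\subseteq\operatorname{Homeo}(X)$. *)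

theory Defs
  imports "HOL-Analysis.Analysis" "HOL-Computational_Algebra.Primes" "HOL-Library.Extended_Nat"
begin

definition is_scale :: "(nat \<Rightarrow> nat) \<Rightarrow> bool" where
  "is_scale p \<longleftrightarrow> (\<forall>n. 0 < p n \<and> p n dvd p (Suc n)) \<and>
                    \<not> (\<exists>N. \<forall>n\<ge>N. p n = p N)"

definition lim_val :: "nat \<Rightarrow> (nat \<Rightarrow> nat) \<Rightarrow> enat" where
  "lim_val q p = (SUP n. enat (multiplicity q (p n)))"

definition scale_equiv :: "(nat \<Rightarrow> nat) \<Rightarrow> (nat \<Rightarrow> nat) \<Rightarrow> bool" where
  "scale_equiv p s \<longleftrightarrow> (\<forall>q. prime q \<longrightarrow> lim_val q p = lim_val q s)"

text \<open>The odometer as a subset of the product of the Z/p_n Z = {0..<p n}.\<close>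
definition odometer_set :: "(nat \<Rightarrow> nat) \<Rightarrow> (nat \<Rightarrow> nat) set" where
  "odometer_set p = {x. \<forall>n. x n < p n \<and> x (Suc n) mod p n = x n}"

definition odometer :: "(nat \<Rightarrow> nat) \<Rightarrow> (nat \<Rightarrow> nat) topology" where
  "odometer p = subtopology (product_topology (\<lambda>n. discrete_topology {..<p n}) UNIV)
                            (odometer_set p)"

text \<open>Translation by c times the element 1 = (1,1,...).\<close>
definition odo_add :: "(nat \<Rightarrow> nat) \<Rightarrow> nat \<Rightarrow> (nat \<Rightarrow> nat) \<Rightarrow> (nat \<Rightarrow> nat)" where
  "odo_add p c x = (\<lambda>n. (x n + c) mod p n)"

definition Aut :: "'a topology \<Rightarrow> ('a \<Rightarrow> 'a) \<Rightarrow> ('a \<Rightarrow> 'a) set" where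
  "Aut X T = {f. homeomorphic_map X X f \<and> (\<forall>x\<in>topspace X. f (T x) = T (f x))}"

definition Aut_inf :: "'a topology \<Rightarrow> ('a \<Rightarrow> 'a) \<Rightarrow> ('a \<Rightarrow> 'a) set" where
  "Aut_inf X T = (\<Union>n\<in>{1..}. Aut X (T ^^ n))"

end

theory Submission
  imports Defs "HOL-Number_Theory.Cong"
begin

text \<open>
  If a homeomorphism \<open>f\<close> commutes with \<open>+m\<close>, it commutes with every \<open>+km\<close>. Whenever
  \<open>gcd m p\<^sub>j\<close> divides \<open>a\<close> for all \<open>j\<close>, we can pick \<open>k\<^sub>j\<close> with \<open>k\<^sub>j m \<equiv> a (mod p\<^sub>j)\<close>; then
  \<open>x + k\<^sub>j m \<rightarrow> x + a\<close> in the odometer, and continuity of \<open>f\<close> forces \<open>f\<close> to commute with \<open>+a\<close>.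
  For \<open>m > 0\<close> the numbers \<open>gcd m p\<^sub>j\<close> are among the finitely many divisors of \<open>m\<close>, and each
  of them divides some term of any scale equivalent to \<open>(p\<^sub>n)\<close>, so a single term \<open>a = s\<^sub>N\<close> works.
\<close>

lemma dvd_chain_le:
  fixes s :: "nat \<Rightarrow> 'a::comm_monoid_mult"
  assumes "\<And>n. s n dvd s (Suc n)" and "i \<le> j"
  shows "s i dvd s j"
  using transitive_stepwise_le[of i j "\<lambda>i j. s i dvd s j"] assms by (meson dvd_refl dvd_trans)

lemma dvd_chain_common_term:
  fixes s :: "nat \<Rightarrow> 'a::comm_monoid_mult"
  assumes chain: "\<And>n. s n dvd s (Suc n)" and "finite D" and dvd: "\<And>d. d \<in> D \<Longrightarrow> \<exists>n. d dvd s n"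
  shows "\<exists>N. \<forall>d\<in>D. d dvd s N"
proof -
  obtain n where n: "\<And>d. d \<in> D \<Longrightarrow> d dvd s (n d)"
    using dvd by metis
  have "d dvd s (Max (n ` D))" if "d \<in> D" for d
    using n[OF that] dvd_chain_le[of s, OF chain, of "n d" "Max (n ` D)"] \<open>finite D\<close> that
    by (meson Max_ge dvd_trans finite_imageI imageI)
  then show ?thesis by blast
qed

lemma enat_le_SUP_enat_iff:
  fixes f :: "nat \<Rightarrow> nat"
  shows "enat t \<le> (SUP n. enat (f n)) \<longleftrightarrow> (\<exists>n. t \<le> f n)"
proof
  assume le: "enat t \<le> (SUP n. enat (f n))"
  show "\<exists>n. t \<le> f n"
  proof (cases t)
    case (Suc t')
    then have "enat t' < (SUP n. enat (f n))"
      using le by (metis Suc_ile_eq)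
    then show ?thesis
      using Suc by (auto simp: less_SUP_iff Suc_le_eq)
  qed simp
qed (auto intro: SUP_upper2)

lemma dvd_chain_term_iff_multiplicity_le_lim_val:
  fixes s :: "nat \<Rightarrow> nat"
  assumes pos: "\<And>n. 0 < s n" and chain: "\<And>n. s n dvd s (Suc n)" and "0 < d"
  shows "(\<exists>n. d dvd s n) \<longleftrightarrow> (\<forall>q. prime q \<longrightarrow> enat (multiplicity q d) \<le> lim_val q s)"
proof
  assume "\<exists>n. d dvd s n"
  then obtain n where "d dvd s n" by blast
  then have "multiplicity q d \<le> multiplicity q (s n)" for q
    using pos[of n] by (intro dvd_imp_multiplicity_le) auto
  then show "\<forall>q. prime q \<longrightarrow> enat (multiplicity q d) \<le> lim_val q s"
    unfolding lim_val_def by (meson SUP_upper2 UNIV_I enat_ord_simps(1))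
next
  assume le: "\<forall>q. prime q \<longrightarrow> enat (multiplicity q d) \<le> lim_val q s"
  have "\<exists>n. q ^ multiplicity q d dvd s n" if "prime q" for q
    using le that unfolding lim_val_def enat_le_SUP_enat_iff by (meson multiplicity_dvd')
  then have "\<exists>N. \<forall>r \<in> (\<lambda>q. q ^ multiplicity q d) ` prime_factors d. r dvd s N"
    by (intro dvd_chain_common_term[of s, OF chain]) (auto simp: in_prime_factors_iff)
  then obtain N where N: "\<And>q. q \<in> prime_factors d \<Longrightarrow> q ^ multiplicity q d dvd s N"
    by blast
  have "multiplicity q d \<le> multiplicity q (s N)" if "prime q" for q
  proof (cases "q \<in> prime_factors d")
    case True
    then show ?thesis
      using N pos[of N] that by (intro multiplicity_geI) auto
  next
    case False
    then show ?thesis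
      using \<open>0 < d\<close> that by (simp add: in_prime_factors_iff not_dvd_imp_multiplicity_0)
  qed
  then show "\<exists>n. d dvd s n"
    using \<open>0 < d\<close> by (blast intro: multiplicity_le_imp_dvd)
qed

lemma scale_equiv_dvd_term:
  fixes p s :: "nat \<Rightarrow> nat"
  assumes "\<And>n. 0 < p n" "\<And>n. p n dvd p (Suc n)" "\<And>n. 0 < s n" "\<And>n. s n dvd s (Suc n)"
    and "scale_equiv p s" and "d dvd p j"
  shows "\<exists>n. d dvd s n"
proof -
  have "0 < d"
    using assms(1)[of j] assms(6) by (cases "d = 0") auto
  have "\<forall>q. prime q \<longrightarrow> enat (multiplicity q d) \<le> lim_val q p"
    using dvd_chain_term_iff_multiplicity_le_lim_val[of p, OF assms(1,2) \<open>0 < d\<close>] assms(6) by blast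
  then have "\<forall>q. prime q \<longrightarrow> enat (multiplicity q d) \<le> lim_val q s"
    using \<open>scale_equiv p s\<close> by (simp add: scale_equiv_def)
  then show ?thesis
    using dvd_chain_term_iff_multiplicity_le_lim_val[of s, OF assms(3,4) \<open>0 < d\<close>] by blast
qed

lemma scale_equiv_gcd_dvd_term:
  fixes p s :: "nat \<Rightarrow> nat"
  assumes "\<And>n. 0 < p n" "\<And>n. p n dvd p (Suc n)" "\<And>n. 0 < s n" "\<And>n. s n dvd s (Suc n)"
    and "scale_equiv p s" and "0 < m"
  shows "\<exists>N. \<forall>j. gcd m (p j) dvd s N"
proof -
  have "finite (range (\<lambda>j. gcd m (p j)))"
    by (intro finite_subset[OF _ finite_divisors_nat[OF \<open>0 < m\<close>]]) auto
  moreover have "\<exists>n. gcd m (p j) dvd s n" for j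
    using scale_equiv_dvd_term[of p s, OF assms(1-5) gcd_dvd2] .
  ultimately have "\<exists>N. \<forall>d \<in> range (\<lambda>j. gcd m (p j)). d dvd s N"
    using dvd_chain_common_term[of s, OF assms(4)] by blast
  then show ?thesis
    by simp
qed

lemma Aut_cong:
  assumes "\<And>x. x \<in> topspace X \<Longrightarrow> T x = T' x"
  shows "Aut X T = Aut X T'"
proof -
  have "f (T x) = T (f x) \<longleftrightarrow> f (T' x) = T' (f x)"
    if "homeomorphic_map X X f" and x: "x \<in> topspace X" for f x
  proof -
    have "f x \<in> topspace X"
      using homeomorphic_imp_surjective_map[OF that(1)] x by blast
    then show ?thesis
      using assms x by simp
  qed
  then show ?thesis
    unfolding Aut_def by blast
qed

lemma Aut_subset_Aut_funpow:
  assumes "\<And>x. x \<in> topspace X \<Longrightarrow> T x \<in> topspace X"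
  shows "Aut X T \<subseteq> Aut X (T ^^ k)"
proof
  fix f assume f: "f \<in> Aut X T"
  have "(T ^^ k) x \<in> topspace X \<and> f ((T ^^ k) x) = (T ^^ k) (f x)" if "x \<in> topspace X" for x
    using f assms that by (induction k) (auto simp: Aut_def)
  with f show "f \<in> Aut X (T ^^ k)"
    by (simp add: Aut_def)
qed

lemma topspace_odometer: "topspace (odometer p) = odometer_set p"
  by (auto simp: odometer_def odometer_set_def PiE_def extensional_def)

lemma Hausdorff_space_odometer: "Hausdorff_space (odometer p)"
  unfolding odometer_def
  by (intro Hausdorff_space_subtopology) (simp add: Hausdorff_space_product_topology)

lemma odo_add_in_odometer_set:
  assumes chain: "\<And>n. p n dvd p (Suc n)" and x: "x \<in> odometer_set p"
  shows "odo_add p c x \<in> odometer_set p"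
proof -
  have "(x (Suc n) + c) mod p (Suc n) mod p n = (x n + c) mod p n" for n
  proof -
    have "(x (Suc n) + c) mod p (Suc n) mod p n = (x (Suc n) mod p n + c) mod p n"
      using chain by (simp add: mod_mod_cancel mod_add_left_eq)
    also have "\<dots> = (x n + c) mod p n"
      using x by (simp add: odometer_set_def)
    finally show ?thesis .
  qed
  moreover have "0 < p n" for n
    using x by (simp add: odometer_set_def) (metis gr_zeroI not_less_zero)
  ultimately show ?thesis
    by (simp add: odometer_set_def odo_add_def)
qed

lemma odo_add_odo_add: "odo_add p a (odo_add p b x) = odo_add p (a + b) x"
  by (simp add: odo_add_def fun_eq_iff mod_simps ac_simps)

lemma funpow_odo_add:
  assumes "x \<in> odometer_set p"
  shows "(odo_add p c ^^ k) x = odo_add p (k * c) x"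
proof (induction k)
  case 0
  then show ?case
    using assms by (auto simp: odo_add_def fun_eq_iff odometer_set_def)
next
  case (Suc k)
  then show ?case
    by (simp add: odo_add_odo_add add.commute)
qed

lemma limitin_odometer_odo_add:
  assumes chain: "\<And>n. p n dvd p (Suc n)" and x: "x \<in> odometer_set p"
    and cong: "\<And>j. [c j = a] (mod p j)"
  shows "limitin (odometer p) (\<lambda>j. odo_add p (c j) x) (odo_add p a x) sequentially"
proof -
  have xc: "odo_add p b x \<in> odometer_set p" for b
    using chain x by (rule odo_add_in_odometer_set)
  have "odo_add p (c j) x i = odo_add p a x i" if "i \<le> j" for i j
    using cong_add[OF cong_refl[of "x i"] cong_dvd_modulus_nat[OF cong dvd_chain_le[of p, OF chain that]]]
    by (simp add: odo_add_def cong_def)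
  then have "limitin (discrete_topology {..<p i}) (\<lambda>j. odo_add p (c j) x i) (odo_add p a x i) sequentially"
    for i
    using xc[of a] unfolding odometer_set_def
    by (intro limitin_eventually) (auto simp: eventually_sequentially)
  then show ?thesis
    using xc unfolding odometer_def limitin_subtopology limitin_componentwise
    by (simp add: odometer_set_def PiE_iff)
qed

lemma Aut_odo_add_subset:
  fixes p :: "nat \<Rightarrow> nat"
  assumes chain: "\<And>n. p n dvd p (Suc n)" and gcd: "\<And>j. gcd m (p j) dvd a"
  shows "Aut (odometer p) (odo_add p m) \<subseteq> Aut (odometer p) (odo_add p a)"
proof
  let ?X = "odometer p"
  fix f assume f: "f \<in> Aut ?X (odo_add p m)"
  then have hom: "homeomorphic_map ?X ?X f"
    by (simp add: Aut_def)
  have fx: "f x \<in> odometer_set p" if "x \<in> odometer_set p" for x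
    using homeomorphic_imp_surjective_map[OF hom] that unfolding topspace_odometer by blast
  have "\<forall>j. \<exists>x. [m * x = a] (mod p j)"
    using cong_solve_dvd_nat gcd by blast
  then obtain k where k: "\<And>j. [m * k j = a] (mod p j)"
    by metis
  have "odo_add p m x \<in> topspace ?X" if "x \<in> topspace ?X" for x
    using odo_add_in_odometer_set[of p, OF chain] that by (simp add: topspace_odometer)
  then have "f \<in> Aut ?X (odo_add p m ^^ k j)" for j
    using f Aut_subset_Aut_funpow by blast
  then have comm: "f (odo_add p (m * k j) x) = odo_add p (m * k j) (f x)" if "x \<in> odometer_set p" for x j
    using that fx by (simp add: Aut_def topspace_odometer funpow_odo_add mult.commute)
  have "f (odo_add p a x) = odo_add p a (f x)" if x: "x \<in> odometer_set p" for x
  proof -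
    have "limitin ?X (\<lambda>j. f (odo_add p (m * k j) x)) (f (odo_add p a x)) sequentially"
      using continuous_map_limit[OF homeomorphic_imp_continuous_map[OF hom]
          limitin_odometer_odo_add[of p, OF chain x k]]
      by (simp add: o_def)
    moreover have "limitin ?X (\<lambda>j. f (odo_add p (m * k j) x)) (odo_add p a (f x)) sequentially"
      using limitin_odometer_odo_add[of p, OF chain fx[OF x] k] comm[OF x] by simp
    ultimately show ?thesis
      by (rule limitin_Hausdorff_unique) (simp_all add: Hausdorff_space_odometer)
  qed
  with hom show "f \<in> Aut ?X (odo_add p a)"
    by (simp add: Aut_def topspace_odometer)
qed

lemma Aut_inf_odometer_eq_Union:
  fixes p s :: "nat \<Rightarrow> nat"
  assumes p: "\<And>n. 0 < p n" "\<And>n. p n dvd p (Suc n)"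
    and s: "\<And>n. 0 < s n" "\<And>n. s n dvd s (Suc n)"
    and "scale_equiv p s"
  shows "Aut_inf (odometer p) (odo_add p 1) = (\<Union>n. Aut (odometer p) (odo_add p (s n)))"
proof -
  let ?X = "odometer p"
  have "Aut_inf ?X (odo_add p 1) = (\<Union>m\<in>{1..}. Aut ?X (odo_add p m))"
    unfolding Aut_inf_def by (intro SUP_cong refl Aut_cong) (simp add: topspace_odometer funpow_odo_add)
  also have "\<dots> = (\<Union>n. Aut ?X (odo_add p (s n)))"
  proof (intro antisym UN_least)
    fix m :: nat assume "m \<in> {1..}"
    then obtain N where "\<And>j. gcd m (p j) dvd s N"
      using scale_equiv_gcd_dvd_term[of p s, OF p s \<open>scale_equiv p s\<close>, of m] by auto
    then show "Aut ?X (odo_add p m) \<subseteq> (\<Union>n. Aut ?X (odo_add p (s n)))"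
      using Aut_odo_add_subset[of p, OF p(2)] by blast
  next
    fix n
    show "Aut ?X (odo_add p (s n)) \<subseteq> (\<Union>m\<in>{1..}. Aut ?X (odo_add p m))"
      using s(1)[of n] by (auto simp: Suc_le_eq)
  qed
  finally show ?thesis .
qed

theorem corollary3p3:
  fixes p s :: "nat \<Rightarrow> nat"
  assumes "is_scale p" and "is_scale s" and "scale_equiv p s"
  shows "Aut_inf (odometer p) (odo_add p 1) = (\<Union>n. Aut (odometer p) (odo_add p (p n)))
       \<and> Aut_inf (odometer p) (odo_add p 1) = (\<Union>n. Aut (odometer p) (odo_add p (s n)))"
proof -
  have p: "\<And>n. 0 < p n" "\<And>n. p n dvd p (Suc n)" and s: "\<And>n. 0 < s n" "\<And>n. s n dvd s (Suc n)"
    using assms(1,2) unfolding is_scale_def by auto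
  have "scale_equiv p p"
    by (simp add: scale_equiv_def)
  then show ?thesis
    using Aut_inf_odometer_eq_Union[of p p, OF p p] Aut_inf_odometer_eq_Union[of p s, OF p s assms(3)] by blast
qed

end
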